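(* Let $n\ge2$ and $h\in(0,1]$. (a) If $\epsilon\in[0,1]$ and $(\bar\omega_k)_{k=0}^{2n}$ satisfies $\bar\omega_k\in C(k,0,0)$, $\bar\omega_{n+k}\in C(n,k,k)$ for $k=0,\dots,n$, then $\max_kH(\bar\omega_k)$ equals $H(\bar\omega_{n/2})=n-\frac{n^2}2+hn$ if $n$ is even; $H(\bar\omega_{(n+1)/2})=n-\frac{n^2+1}2+\epsilon+h(n-1)$ if $n$ is odd and $h\le\epsilon$; $H(\bar\omega_{(n-1)/2})=n-\frac{n^2+1}2-\epsilon+h(n+1)$ if $n$ is odd and $\epsilon<h$. (b) If $0<h<-\epsilon\le1$ and $(\check\omega_k)_{k=0}^{2n}$ satisfies $\check\omega_k\in C(n-k,0,0)$, $\check\omega_{n+k}\in C(0,k,0)$ for $k=0,\dots,n$, then $\max_kH(\check\omega_k)$ equals $H(\check\omega_{n/2})=H(\check\omega_{n+n/2})=n-\frac{n^2}2+hn$ if $n$ is even and $h-\epsilon<1$; $H(\check\omega_{(n+2)/2})=H(\check\omega_{n+(n-2)/2})=n-\frac{n^2}2-2(\epsilon+1)+h(n+2)$ if $n$ is even and $1\le h-\epsilon<2$; $H(\check\omega_{(n+1)/2})=H(\check\omega_{n+(n-1)/2})=n-\frac{n^2+1}2-\epsilon+h(n+1)$ if $n$ is odd. (c) If $0<-\epsilon<h\le1$ and $(\tilde\omega_k)_{k=0}^{n}$ satisfies $\tilde\omega_k\in C(n,k,k)$ for $k=0,\dots,n$, then $\max_kH(\tilde\omega_k)$ equals $H(\tilde\omega_{n/2})=n-\frac{n^2}2-hn$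 if $n$ is even, and $H(\tilde\omega_{(n-1)/2})=n-\frac{n^2+1}2+\epsilon-h(n-1)$ if $n$ is odd.
   Context: The graph $\mathcal G(2,n)$ has vertex set $V=V^{(1)}\cup V^{(2)}$ with $V^{(1)}=\{1,\dots,n\}$, $V^{(2)}=\{n+1,\dots,2n\}$; its edge set is $E=E_{\mathrm{int}}\cup E_{\mathrm{cross}}$, where $E_{\mathrm{int}}$ consists of all pairs of distinct vertices in the same $V^{(k)}$ and $E_{\mathrm{cross}}=\{\{i,i+n\}:1\le i\le n\}$. For $\sigma\in\{-1,+1\}^V$, $H(\sigma)=-\sum_{\{i,j\}\in E_{\mathrm{int}}}\sigma_i\sigma_j-\epsilon\sum_{\{i,j\}\in E_{\mathrm{cross}}}\sigma_i\sigma_j-h\sum_{i\in V}\sigma_i$, with $\epsilon\in[-1,1]$. $C(p_1,p_2,a)$ is the set of configurations with exactly $p_1$ vertices of spin $+1$ in $V^{(1)}$, exactly $p_2$ vertices of spin $+1$ in $V^{(2)}$, and exactly $a$ cross-edges both of whose endpoints have spin $+1$ ($H$ is constant on each such set). *)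

theory Defs
  imports Complex_Main
begin

definition V1 :: "nat \<Rightarrow> nat set" where "V1 n = {1..n}"
definition V2 :: "nat \<Rightarrow> nat set" where "V2 n = {n+1..2*n}"
definition V :: "nat \<Rightarrow> nat set" where "V n = V1 n \<union> V2 n"

definition E_int :: "nat \<Rightarrow> nat set set" where
  "E_int n = {{i, j} | i j. i \<noteq> j \<and> ((i \<in> V1 n \<and> j \<in> V1 n) \<or> (i \<in> V2 n \<and> j \<in> V2 n))}"

definition E_cross :: "nat \<Rightarrow> nat set set" where
  "E_cross n = {{i, i + n} | i. 1 \<le> i \<and> i \<le> n}"

text \<open>Spin configurations: sigma takes values in {-1,+1} on V (values off V are irrelevant).\<close>
definition configs :: "nat \<Rightarrow> (nat \<Rightarrow> real) set" where
  "configs n = {\<sigma>. \<forall>i\<in>V n. \<sigma> i = 1 \<or> \<sigma> i = -1}"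

definition Ham :: "nat \<Rightarrow> real \<Rightarrow> real \<Rightarrow> (nat \<Rightarrow> real) \<Rightarrow> real" where
  "Ham n \<epsilon> h \<sigma> =
     - (\<Sum>e\<in>E_int n. \<Prod>i\<in>e. \<sigma> i)
     - \<epsilon> * (\<Sum>e\<in>E_cross n. \<Prod>i\<in>e. \<sigma> i)
     - h * (\<Sum>i\<in>V n. \<sigma> i)"

definition Cset :: "nat \<Rightarrow> nat \<Rightarrow> nat \<Rightarrow> nat \<Rightarrow> (nat \<Rightarrow> real) set" where
  "Cset n p1 p2 a = {\<sigma> \<in> configs n.
      card {i \<in> V1 n. \<sigma> i = 1} = p1 \<and>
      card {i \<in> V2 n. \<sigma> i = 1} = p2 \<and>
      card {e \<in> E_cross n. \<forall>i\<in>e. \<sigma> i = 1} = a}"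

end

theory Submission
  imports Defs
begin

text \<open>On each class \<open>C(p\<^sub>1, p\<^sub>2, a)\<close> the Hamiltonian takes a closed form in the block
  magnetisations \<open>2p\<^sub>k - n\<close>. Along each of the three paths it is therefore, up to a constant,
  the concave parabola \<open>b x - x\<^sup>2/2\<close> evaluated at \<open>x = 2p - n\<close>, and \<open>x\<close> runs through one parity
  class of integers. On such a class the parabola is maximal at the point within distance 1 of
  its vertex \<open>b\<close>. In path (a) the configurations of the second half lie \<open>4hk\<close> below their
  mirror images in the first half, and in path (b) both halves trace the same energies.\<close>

definition edges_within :: "'a set \<Rightarrow> 'a set set" where
  "edges_within A = {{i, j} | i j. i \<noteq> j \<and> i \<in> A \<and> j \<in> A}"

lemma finite_edges_within: "finite A \<Longrightarrow> finite (edges_within A)"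
proof -
  assume "finite A"
  have "edges_within A \<subseteq> (\<lambda>(i, j). {i, j}) ` (A \<times> A)"
    unfolding edges_within_def by auto
  then show ?thesis using \<open>finite A\<close> by (meson finite_SigmaI finite_imageI finite_subset)
qed

lemma edges_within_empty [simp]: "edges_within {} = {}"
  unfolding edges_within_def by auto

lemma edges_within_insert:
  "a \<notin> A \<Longrightarrow> edges_within (insert a A) = edges_within A \<union> (\<lambda>j. {a, j}) ` A"
  unfolding edges_within_def by auto

lemma sum_edges_within_pm:
  fixes \<sigma> :: "'a \<Rightarrow> real"
  assumes "finite A" and "\<forall>i\<in>A. \<sigma> i = 1 \<or> \<sigma> i = -1"
  shows "(\<Sum>e\<in>edges_within A. \<Prod>i\<in>e. \<sigma> i) = ((\<Sum>i\<in>A. \<sigma> i)\<^sup>2 - real (card A)) / 2"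
  using assms
proof (induction A rule: finite_induct)
  case empty
  then show ?case by simp
next
  case (insert a A)
  have disjoint: "edges_within A \<inter> (\<lambda>j. {a, j}) ` A = {}"
    using insert.hyps(2) unfolding edges_within_def by (fastforce simp: doubleton_eq_iff)
  have inj: "inj_on (\<lambda>j. {a, j}) A"
    using insert.hyps(2) by (auto simp: inj_on_def doubleton_eq_iff)
  have "(\<Prod>i\<in>{a, j}. \<sigma> i) = \<sigma> a * \<sigma> j" if "j \<in> A" for j
    using that insert.hyps(2) by (subst prod.insert) auto
  then have new_edges: "(\<Sum>e\<in>(\<lambda>j. {a, j}) ` A. \<Prod>i\<in>e. \<sigma> i) = \<sigma> a * (\<Sum>j\<in>A. \<sigma> j)"
    using inj
    by (subst sum.reindex) (auto simp: sum_distrib_left intro!: sum.cong)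
  have "(\<Sum>e\<in>edges_within (insert a A). \<Prod>i\<in>e. \<sigma> i)
      = (\<Sum>e\<in>edges_within A. \<Prod>i\<in>e. \<sigma> i) + \<sigma> a * (\<Sum>j\<in>A. \<sigma> j)"
    unfolding edges_within_insert[OF insert.hyps(2)] new_edges[symmetric]
    using insert.hyps(1) disjoint by (intro sum.union_disjoint) (auto simp: finite_edges_within)
  moreover have "\<sigma> a * \<sigma> a = 1" using insert.prems by auto
  ultimately show ?case
    using insert by (simp add: power2_eq_square field_simps)
qed

lemma sum_of_bool_eq_card:
  "finite A \<Longrightarrow> (\<Sum>x\<in>A. of_bool (P x)) = (of_nat (card {x\<in>A. P x}) :: 'b::semiring_1)"
  by (simp add: Int_def)

lemma sum_pm_eq_card:
  fixes \<sigma> :: "'a \<Rightarrow> real"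
  assumes "finite A" and "\<forall>i\<in>A. \<sigma> i = 1 \<or> \<sigma> i = -1"
  shows "(\<Sum>i\<in>A. \<sigma> i) = 2 * real (card {i\<in>A. \<sigma> i = 1}) - real (card A)"
proof -
  have "(\<Sum>i\<in>A. \<sigma> i) = (\<Sum>i\<in>A. 2 * of_bool (\<sigma> i = 1) - 1)"
    using assms(2) by (intro sum.cong) auto
  also have "\<dots> = 2 * real (card {i\<in>A. \<sigma> i = 1}) - real (card A)"
    using assms(1) by (simp add: sum_subtractf sum_distrib_left[symmetric] Int_def)
  finally show ?thesis .
qed

lemma mult_pm_eq_indicators:
  fixes x y :: real
  assumes "x = 1 \<or> x = -1" and "y = 1 \<or> y = -1"
  shows "x * y = 4 * of_bool (x = 1 \<and> y = 1) - 2 * of_bool (x = 1) - 2 * of_bool (y = 1) + 1"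
  using assms by auto

lemma sum_E_cross:
  "(\<Sum>e\<in>E_cross n. \<Prod>i\<in>e. \<sigma> i) = (\<Sum>i=1..n. \<sigma> i * \<sigma> (i + n))"
proof -
  have "E_cross n = (\<lambda>i. {i, i + n}) ` {1..n}" unfolding E_cross_def by auto
  moreover have "inj_on (\<lambda>i. {i, i + n}) {1..n}" by (auto simp: inj_on_def doubleton_eq_iff)
  ultimately show ?thesis by (simp add: sum.reindex)
qed

lemma card_V2_filter: "card {i \<in> V2 n. P i} = card {i \<in> {1..n}. P (i + n)}"
proof -
  have "{i \<in> V2 n. P i} = (\<lambda>i. i + n) ` {i \<in> {1..n}. P (i + n)}"
  proof (intro set_eqI iffI)
    fix x assume "x \<in> {i \<in> V2 n. P i}"
    then show "x \<in> (\<lambda>i. i + n) ` {i \<in> {1..n}. P (i + n)}"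
      by (intro image_eqI[where x="x - n"]) (auto simp: V2_def)
  qed (auto simp: V2_def)
  then show ?thesis by (simp add: card_image)
qed

lemma card_E_cross_filter:
  "card {e \<in> E_cross n. \<forall>i\<in>e. P i} = card {i \<in> {1..n}. P i \<and> P (i + n)}"
proof -
  have "{e \<in> E_cross n. \<forall>i\<in>e. P i} = (\<lambda>i. {i, i + n}) ` {i \<in> {1..n}. P i \<and> P (i + n)}"
    unfolding E_cross_def by auto
  moreover have "inj_on (\<lambda>i. {i, i + n}) {i \<in> {1..n}. P i \<and> P (i + n)}"
    by (auto simp: inj_on_def doubleton_eq_iff)
  ultimately show ?thesis by (simp add: card_image)
qed

lemma sum_E_int_pm:
  fixes \<sigma> :: "nat \<Rightarrow> real"
  assumes "\<forall>i\<in>V n. \<sigma> i = 1 \<or> \<sigma> i = -1"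
  shows "(\<Sum>e\<in>E_int n. \<Prod>i\<in>e. \<sigma> i)
    = ((\<Sum>i\<in>V1 n. \<sigma> i)\<^sup>2 - n) / 2 + ((\<Sum>i\<in>V2 n. \<sigma> i)\<^sup>2 - n) / 2"
proof -
  have fin: "finite (V1 n)" "finite (V2 n)" and disj: "V1 n \<inter> V2 n = {}"
    and card: "card (V1 n) = n" "card (V2 n) = n"
    unfolding V1_def V2_def by auto
  have "E_int n = edges_within (V1 n) \<union> edges_within (V2 n)"
    unfolding E_int_def edges_within_def by blast
  moreover have "edges_within (V1 n) \<inter> edges_within (V2 n) = {}"
    using disj unfolding edges_within_def by (auto simp: doubleton_eq_iff)
  ultimately have "(\<Sum>e\<in>E_int n. \<Prod>i\<in>e. \<sigma> i)
      = (\<Sum>e\<in>edges_within (V1 n). \<Prod>i\<in>e. \<sigma> i) + (\<Sum>e\<in>edges_within (V2 n). \<Prod>i\<in>e. \<sigma> i)"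
    by (simp add: sum.union_disjoint finite_edges_within fin)
  then show ?thesis
    using assms card sum_edges_within_pm[OF fin(1), of \<sigma>] sum_edges_within_pm[OF fin(2), of \<sigma>]
    unfolding V_def by simp
qed

lemma sum_E_cross_pm:
  fixes \<sigma> :: "nat \<Rightarrow> real"
  assumes "\<forall>i\<in>V n. \<sigma> i = 1 \<or> \<sigma> i = -1"
  shows "(\<Sum>e\<in>E_cross n. \<Prod>i\<in>e. \<sigma> i)
    = n - 2 * real (card {i \<in> V1 n. \<sigma> i = 1}) - 2 * real (card {i \<in> V2 n. \<sigma> i = 1})
      + 4 * real (card {e \<in> E_cross n. \<forall>i\<in>e. \<sigma> i = 1})"
proof -
  have "\<sigma> i * \<sigma> (i + n) = 4 * of_bool (\<sigma> i = 1 \<and> \<sigma> (i + n) = 1)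
      - 2 * of_bool (\<sigma> i = 1) - 2 * of_bool (\<sigma> (i + n) = 1) + 1" if "i \<in> {1..n}" for i
    using that assms unfolding V_def V1_def V2_def by (intro mult_pm_eq_indicators) auto
  then have "(\<Sum>i=1..n. \<sigma> i * \<sigma> (i + n))
      = 4 * (\<Sum>i=1..n. of_bool (\<sigma> i = 1 \<and> \<sigma> (i + n) = 1) :: real)
        - 2 * (\<Sum>i=1..n. of_bool (\<sigma> i = 1)) - 2 * (\<Sum>i=1..n. of_bool (\<sigma> (i + n) = 1)) + real n"
    by (simp add: sum.distrib sum_subtractf sum_distrib_left)
  then show ?thesis
    unfolding sum_E_cross sum_of_bool_eq_card[OF finite_atLeastAtMost] card_V2_filter
      card_E_cross_filter V1_def
    by simp
qed

definition Cset_energy :: "nat \<Rightarrow> real \<Rightarrow> real \<Rightarrow> nat \<Rightarrow> nat \<Rightarrow> nat \<Rightarrow> real" where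
  "Cset_energy n \<epsilon> h p1 p2 a =
     - (((2 * real p1 - n)\<^sup>2 - n) / 2 + ((2 * real p2 - n)\<^sup>2 - n) / 2)
     - \<epsilon> * (n - 2 * real p1 - 2 * real p2 + 4 * real a)
     - h * ((2 * real p1 - n) + (2 * real p2 - n))"

lemma Ham_eq_Cset_energy:
  assumes "\<sigma> \<in> Cset n p1 p2 a"
  shows "Ham n \<epsilon> h \<sigma> = Cset_energy n \<epsilon> h p1 p2 a"
proof -
  have pm: "\<forall>i\<in>V n. \<sigma> i = 1 \<or> \<sigma> i = -1"
    and counts: "card {i \<in> V1 n. \<sigma> i = 1} = p1" "card {i \<in> V2 n. \<sigma> i = 1} = p2"
      "card {e \<in> E_cross n. \<forall>i\<in>e. \<sigma> i = 1} = a"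
    using assms unfolding Cset_def configs_def by auto
  have fin: "finite (V1 n)" "finite (V2 n)" and disj: "V1 n \<inter> V2 n = {}"
    and card: "card (V1 n) = n" "card (V2 n) = n"
    unfolding V1_def V2_def by auto
  have "(\<Sum>i\<in>V1 n. \<sigma> i) = 2 * real p1 - n" "(\<Sum>i\<in>V2 n. \<sigma> i) = 2 * real p2 - n"
    using pm counts card sum_pm_eq_card[OF fin(1), of \<sigma>] sum_pm_eq_card[OF fin(2), of \<sigma>]
    unfolding V_def by auto
  moreover have "(\<Sum>i\<in>V n. \<sigma> i) = (\<Sum>i\<in>V1 n. \<sigma> i) + (\<Sum>i\<in>V2 n. \<sigma> i)"
    unfolding V_def using sum.union_disjoint[OF fin disj] .
  ultimately show ?thesis
    unfolding Ham_def Cset_energy_def sum_E_int_pm[OF pm] sum_E_cross_pm[OF pm] counts by simp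
qed

definition parabola :: "real \<Rightarrow> real \<Rightarrow> real" where
  "parabola b x = b * x - x\<^sup>2 / 2"

lemma parabola_le_near_vertex:
  assumes near: "\<bar>y - b\<bar> \<le> 1" and apart: "x = y \<or> 2 \<le> \<bar>x - y\<bar>"
  shows "parabola b x \<le> parabola b y"
proof -
  have "\<bar>y - b\<bar> \<le> \<bar>x - b\<bar>"
    using apart
  proof
    assume "2 \<le> \<bar>x - y\<bar>"
    then show ?thesis using near by linarith
  qed simp
  then have "(y - b)\<^sup>2 \<le> (x - b)\<^sup>2" by (simp add: abs_le_square_iff)
  then show ?thesis unfolding parabola_def by (simp add: power2_eq_square algebra_simps)
qed

lemma parabola_max_on_parity_class:
  fixes p j n :: nat
  assumes "\<bar>2 * real j - n - b\<bar> \<le> 1"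
  shows "parabola b (2 * real p - n) \<le> parabola b (2 * real j - n)"
proof (rule parabola_le_near_vertex[OF assms])
  have "p = j \<or> 1 \<le> \<bar>real p - real j\<bar>" by linarith
  then show "2 * real p - n = 2 * real j - n \<or> 2 \<le> \<bar>(2 * real p - n) - (2 * real j - n)\<bar>"
    by auto
qed

lemma Cset_energy_one_block:
  "Cset_energy n \<epsilon> h p 0 0 = real n - real n ^ 2 / 2 + h * n + parabola (\<epsilon> - h) (2 * real p - n)"
  unfolding Cset_energy_def parabola_def by (simp add: power2_eq_square field_simps)

lemma Cset_energy_block_swap: "Cset_energy n \<epsilon> h 0 p 0 = Cset_energy n \<epsilon> h p 0 0"
  unfolding Cset_energy_def by (simp add: algebra_simps)

lemma Cset_energy_full_block:
  "Cset_energy n \<epsilon> h n p p = real n - real n ^ 2 / 2 - h * n + parabola (- (\<epsilon> + h)) (2 * real p - n)"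
  unfolding Cset_energy_def parabola_def by (simp add: power2_eq_square field_simps)

lemma Cset_energy_full_block_eq_mirror:
  "k \<le> n \<Longrightarrow> Cset_energy n \<epsilon> h n k k = Cset_energy n \<epsilon> h (n - k) 0 0 - 4 * h * k"
  unfolding Cset_energy_def by (simp add: of_nat_diff power2_eq_square algebra_simps)

lemma Max_image_eqI:
  fixes f :: "'a \<Rightarrow> 'b::linorder"
  assumes "finite A" and "j \<in> A" and "\<And>k. k \<in> A \<Longrightarrow> f k \<le> f j"
  shows "Max (f ` A) = f j"
  using assms by (intro Max_eqI) auto

lemma le_double_cases:
  fixes k n :: nat
  assumes "k \<le> 2 * n"
  obtains "k \<le> n" | i where "i \<le> n" and "k = n + i"
  using assms by (metis le_add_diff_inverse mult_2 nat_le_linear add_le_cancel_left)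

lemma Max_Ham_path_a:
  assumes h: "0 \<le> h"
    and path: "\<forall>k\<le>n. \<omega> k \<in> Cset n k 0 0 \<and> \<omega> (n + k) \<in> Cset n n k k"
    and j: "j \<le> n" and vertex: "\<bar>2 * real j - n - (\<epsilon> - h)\<bar> \<le> 1"
  shows "Max ((\<lambda>k. Ham n \<epsilon> h (\<omega> k)) ` {0..2*n}) = Ham n \<epsilon> h (\<omega> j)"
    and "Ham n \<epsilon> h (\<omega> j) = real n - real n ^ 2 / 2 + h * n + parabola (\<epsilon> - h) (2 * real j - n)"
proof -
  define g where "g p = Cset_energy n \<epsilon> h p 0 0" for p
  have first: "Ham n \<epsilon> h (\<omega> k) = g k" if "k \<le> n" for k
    using path that by (simp add: g_def Ham_eq_Cset_energy)
  have second: "Ham n \<epsilon> h (\<omega> (n + k)) \<le> g (n - k)" if "k \<le> n" for k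
    using path that h
    by (simp add: g_def Ham_eq_Cset_energy[of "\<omega> (n + k)" n n k k] Cset_energy_full_block_eq_mirror)
  have "g p \<le> g j" for p
    using parabola_max_on_parity_class[OF vertex] by (simp add: g_def Cset_energy_one_block)
  then show "Max ((\<lambda>k. Ham n \<epsilon> h (\<omega> k)) ` {0..2*n}) = Ham n \<epsilon> h (\<omega> j)"
    using j first second
    by (intro Max_image_eqI) (auto elim!: le_double_cases intro: order.trans)
  show "Ham n \<epsilon> h (\<omega> j) = real n - real n ^ 2 / 2 + h * n + parabola (\<epsilon> - h) (2 * real j - n)"
    using first[OF j] by (simp add: g_def Cset_energy_one_block)
qed

lemma Max_Ham_path_b:
  assumes path: "\<forall>k\<le>n. \<omega> k \<in> Cset n (n - k) 0 0 \<and> \<omega> (n + k) \<in> Cset n 0 k 0"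
    and j: "j \<le> n" and vertex: "\<bar>2 * real j - n - (\<epsilon> - h)\<bar> \<le> 1"
  shows "Max ((\<lambda>k. Ham n \<epsilon> h (\<omega> k)) ` {0..2*n}) = Ham n \<epsilon> h (\<omega> (n - j))"
    and "Ham n \<epsilon> h (\<omega> (n - j)) = Ham n \<epsilon> h (\<omega> (n + j))"
    and "Ham n \<epsilon> h (\<omega> (n + j)) = real n - real n ^ 2 / 2 + h * n + parabola (\<epsilon> - h) (2 * real j - n)"
proof -
  define g where "g p = Cset_energy n \<epsilon> h p 0 0" for p
  have first: "Ham n \<epsilon> h (\<omega> k) = g (n - k)" if "k \<le> n" for k
    using path that by (simp add: g_def Ham_eq_Cset_energy)
  have second: "Ham n \<epsilon> h (\<omega> (n + k)) = g k" if "k \<le> n" for k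
    using path that by (simp add: g_def Ham_eq_Cset_energy[of "\<omega> (n + k)" n 0 k 0] Cset_energy_block_swap)
  have "g p \<le> g j" for p
    using parabola_max_on_parity_class[OF vertex] by (simp add: g_def Cset_energy_one_block)
  then show "Max ((\<lambda>k. Ham n \<epsilon> h (\<omega> k)) ` {0..2*n}) = Ham n \<epsilon> h (\<omega> (n - j))"
    using j first second
    by (intro Max_image_eqI) (auto elim!: le_double_cases)
  show "Ham n \<epsilon> h (\<omega> (n - j)) = Ham n \<epsilon> h (\<omega> (n + j))"
    using j first second by simp
  show "Ham n \<epsilon> h (\<omega> (n + j)) = real n - real n ^ 2 / 2 + h * n + parabola (\<epsilon> - h) (2 * real j - n)"
    using second[OF j] by (simp add: g_def Cset_energy_one_block)
qed

lemma Max_Ham_path_c: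
  assumes path: "\<forall>k\<le>n. \<omega> k \<in> Cset n n k k"
    and j: "j \<le> n" and vertex: "\<bar>2 * real j - n - (- (\<epsilon> + h))\<bar> \<le> 1"
  shows "Max ((\<lambda>k. Ham n \<epsilon> h (\<omega> k)) ` {0..n}) = Ham n \<epsilon> h (\<omega> j)"
    and "Ham n \<epsilon> h (\<omega> j) = real n - real n ^ 2 / 2 - h * n + parabola (- (\<epsilon> + h)) (2 * real j - n)"
proof -
  have energy: "Ham n \<epsilon> h (\<omega> k) = real n - real n ^ 2 / 2 - h * n + parabola (- (\<epsilon> + h)) (2 * real k - n)"
    if "k \<le> n" for k
    using path that by (simp add: Ham_eq_Cset_energy[of "\<omega> k" n n k k] Cset_energy_full_block)
  then show "Max ((\<lambda>k. Ham n \<epsilon> h (\<omega> k)) ` {0..n}) = Ham n \<epsilon> h (\<omega> j)"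
    using j parabola_max_on_parity_class[OF vertex] by (intro Max_image_eqI) auto
  show "Ham n \<epsilon> h (\<omega> j) = real n - real n ^ 2 / 2 - h * n + parabola (- (\<epsilon> + h)) (2 * real j - n)"
    using energy[OF j] .
qed

lemma Max_Ham_path_a_by_parity:
  assumes "0 < h" and "h \<le> 1" and "0 \<le> \<epsilon>" and "\<epsilon> \<le> 1"
    and path: "\<forall>k\<le>n. \<omega> k \<in> Cset n k 0 0 \<and> \<omega> (n + k) \<in> Cset n n k k"
  defines "M \<equiv> Max ((\<lambda>k. Ham n \<epsilon> h (\<omega> k)) ` {0..2*n})"
  shows "even n \<Longrightarrow> M = Ham n \<epsilon> h (\<omega> (n div 2)) \<and>
           Ham n \<epsilon> h (\<omega> (n div 2)) = real n - real n ^ 2 / 2 + h * real n"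
    and "odd n \<Longrightarrow> h \<le> \<epsilon> \<Longrightarrow> M = Ham n \<epsilon> h (\<omega> ((n + 1) div 2)) \<and>
           Ham n \<epsilon> h (\<omega> ((n + 1) div 2)) = real n - (real n ^ 2 + 1) / 2 + \<epsilon> + h * (real n - 1)"
    and "odd n \<Longrightarrow> \<epsilon> < h \<Longrightarrow> M = Ham n \<epsilon> h (\<omega> ((n - 1) div 2)) \<and>
           Ham n \<epsilon> h (\<omega> ((n - 1) div 2)) = real n - (real n ^ 2 + 1) / 2 - \<epsilon> + h * (real n + 1)"
proof -
  have h: "0 \<le> h" using assms by simp
  show "M = Ham n \<epsilon> h (\<omega> (n div 2)) \<and>
      Ham n \<epsilon> h (\<omega> (n div 2)) = real n - real n ^ 2 / 2 + h * real n" if "even n"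
  proof -
    obtain q where n: "n = 2 * q" using \<open>even n\<close> ..
    have "\<bar>2 * real q - n - (\<epsilon> - h)\<bar> \<le> 1" using assms n by auto
    from Max_Ham_path_a[OF h path _ this] show ?thesis
      using n by (simp add: M_def parabola_def)
  qed
  show "M = Ham n \<epsilon> h (\<omega> ((n + 1) div 2)) \<and>
      Ham n \<epsilon> h (\<omega> ((n + 1) div 2)) = real n - (real n ^ 2 + 1) / 2 + \<epsilon> + h * (real n - 1)"
    if "odd n" and "h \<le> \<epsilon>"
  proof -
    obtain q where n: "n = 2 * q + 1" using \<open>odd n\<close> ..
    have "\<bar>2 * real (q + 1) - n - (\<epsilon> - h)\<bar> \<le> 1" using assms that n by auto
    from Max_Ham_path_a[OF h path _ this] show ?thesis
      using n by (simp add: M_def parabola_def power2_eq_square field_simps)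
  qed
  show "M = Ham n \<epsilon> h (\<omega> ((n - 1) div 2)) \<and>
      Ham n \<epsilon> h (\<omega> ((n - 1) div 2)) = real n - (real n ^ 2 + 1) / 2 - \<epsilon> + h * (real n + 1)"
    if "odd n" and "\<epsilon> < h"
  proof -
    obtain q where n: "n = 2 * q + 1" using \<open>odd n\<close> ..
    have "\<bar>2 * real q - n - (\<epsilon> - h)\<bar> \<le> 1" using assms that n by auto
    from Max_Ham_path_a[OF h path _ this] show ?thesis
      using n by (simp add: M_def parabola_def power2_eq_square field_simps)
  qed
qed

lemma Max_Ham_path_b_by_parity:
  assumes "2 \<le> n" and "0 < h" and "h \<le> 1" and "h < - \<epsilon>" and "- \<epsilon> \<le> 1"
    and path: "\<forall>k\<le>n. \<omega> k \<in> Cset n (n - k) 0 0 \<and> \<omega> (n + k) \<in> Cset n 0 k 0"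
  defines "M \<equiv> Max ((\<lambda>k. Ham n \<epsilon> h (\<omega> k)) ` {0..2*n})"
  shows "even n \<Longrightarrow> h - \<epsilon> < 1 \<Longrightarrow>
           M = Ham n \<epsilon> h (\<omega> (n div 2)) \<and>
           Ham n \<epsilon> h (\<omega> (n div 2)) = Ham n \<epsilon> h (\<omega> (n + n div 2)) \<and>
           Ham n \<epsilon> h (\<omega> (n + n div 2)) = real n - real n ^ 2 / 2 + h * real n"
    and "even n \<Longrightarrow> 1 \<le> h - \<epsilon> \<Longrightarrow> h - \<epsilon> < 2 \<Longrightarrow>
           M = Ham n \<epsilon> h (\<omega> ((n + 2) div 2)) \<and>
           Ham n \<epsilon> h (\<omega> ((n + 2) div 2)) = Ham n \<epsilon> h (\<omega> (n + (n - 2) div 2)) \<and>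
           Ham n \<epsilon> h (\<omega> (n + (n - 2) div 2)) =
             real n - real n ^ 2 / 2 - 2 * (\<epsilon> + 1) + h * (real n + 2)"
    and "odd n \<Longrightarrow>
           M = Ham n \<epsilon> h (\<omega> ((n + 1) div 2)) \<and>
           Ham n \<epsilon> h (\<omega> ((n + 1) div 2)) = Ham n \<epsilon> h (\<omega> (n + (n - 1) div 2)) \<and>
           Ham n \<epsilon> h (\<omega> (n + (n - 1) div 2)) =
             real n - (real n ^ 2 + 1) / 2 - \<epsilon> + h * (real n + 1)"
proof -
  show "M = Ham n \<epsilon> h (\<omega> (n div 2)) \<and>
      Ham n \<epsilon> h (\<omega> (n div 2)) = Ham n \<epsilon> h (\<omega> (n + n div 2)) \<and>
      Ham n \<epsilon> h (\<omega> (n + n div 2)) = real n - real n ^ 2 / 2 + h * real n"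
    if "even n" and "h - \<epsilon> < 1"
  proof -
    obtain q where n: "n = 2 * q" using \<open>even n\<close> ..
    have "\<bar>2 * real q - n - (\<epsilon> - h)\<bar> \<le> 1" using assms that n by auto
    from Max_Ham_path_b[OF path _ this] show ?thesis
      using n by (simp add: M_def parabola_def)
  qed
  show "M = Ham n \<epsilon> h (\<omega> ((n + 2) div 2)) \<and>
      Ham n \<epsilon> h (\<omega> ((n + 2) div 2)) = Ham n \<epsilon> h (\<omega> (n + (n - 2) div 2)) \<and>
      Ham n \<epsilon> h (\<omega> (n + (n - 2) div 2)) =
        real n - real n ^ 2 / 2 - 2 * (\<epsilon> + 1) + h * (real n + 2)"
    if "even n" and "1 \<le> h - \<epsilon>" and "h - \<epsilon> < 2"
  proof -
    have "\<exists>q. n = 2 * q + 2" using \<open>even n\<close> \<open>2 \<le> n\<close> by presburger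
    then obtain q where n: "n = 2 * q + 2" ..
    have "\<bar>2 * real q - n - (\<epsilon> - h)\<bar> \<le> 1" using that n by auto
    from Max_Ham_path_b[OF path _ this] show ?thesis
      using n by (simp add: M_def parabola_def power2_eq_square field_simps)
  qed
  show "M = Ham n \<epsilon> h (\<omega> ((n + 1) div 2)) \<and>
      Ham n \<epsilon> h (\<omega> ((n + 1) div 2)) = Ham n \<epsilon> h (\<omega> (n + (n - 1) div 2)) \<and>
      Ham n \<epsilon> h (\<omega> (n + (n - 1) div 2)) =
        real n - (real n ^ 2 + 1) / 2 - \<epsilon> + h * (real n + 1)"
    if "odd n"
  proof -
    obtain q where n: "n = 2 * q + 1" using \<open>odd n\<close> ..
    have "\<bar>2 * real q - n - (\<epsilon> - h)\<bar> \<le> 1" using assms n by auto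
    from Max_Ham_path_b[OF path _ this] show ?thesis
      using n by (simp add: M_def parabola_def power2_eq_square field_simps)
  qed
qed

lemma Max_Ham_path_c_by_parity:
  assumes "h \<le> 1" and "0 < - \<epsilon>" and "- \<epsilon> < h"
    and path: "\<forall>k\<le>n. \<omega> k \<in> Cset n n k k"
  defines "M \<equiv> Max ((\<lambda>k. Ham n \<epsilon> h (\<omega> k)) ` {0..n})"
  shows "even n \<Longrightarrow> M = Ham n \<epsilon> h (\<omega> (n div 2)) \<and>
           Ham n \<epsilon> h (\<omega> (n div 2)) = real n - real n ^ 2 / 2 - h * real n"
    and "odd n \<Longrightarrow> M = Ham n \<epsilon> h (\<omega> ((n - 1) div 2)) \<and>
           Ham n \<epsilon> h (\<omega> ((n - 1) div 2)) = real n - (real n ^ 2 + 1) / 2 + \<epsilon> - h * (real n - 1)"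
proof -
  show "M = Ham n \<epsilon> h (\<omega> (n div 2)) \<and>
      Ham n \<epsilon> h (\<omega> (n div 2)) = real n - real n ^ 2 / 2 - h * real n" if "even n"
  proof -
    obtain q where n: "n = 2 * q" using \<open>even n\<close> ..
    have "\<bar>2 * real q - n - (- (\<epsilon> + h))\<bar> \<le> 1" using assms n by auto
    from Max_Ham_path_c[OF path _ this] show ?thesis
      using n by (simp add: M_def parabola_def)
  qed
  show "M = Ham n \<epsilon> h (\<omega> ((n - 1) div 2)) \<and>
      Ham n \<epsilon> h (\<omega> ((n - 1) div 2)) = real n - (real n ^ 2 + 1) / 2 + \<epsilon> - h * (real n - 1)"
    if "odd n"
  proof -
    obtain q where n: "n = 2 * q + 1" using \<open>odd n\<close> ..
    have "\<bar>2 * real q - n - (- (\<epsilon> + h))\<bar> \<le> 1" using assms n by auto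
    from Max_Ham_path_c[OF path _ this] show ?thesis
      using n by (simp add: M_def parabola_def power2_eq_square field_simps)
  qed
qed

theorem lemma5p2:
  fixes n :: nat and \<epsilon> h :: real
  assumes n2: "n \<ge> 2" and h0: "0 < h" and h1: "h \<le> 1"
  shows
   "(\<forall>\<omega> :: nat \<Rightarrow> nat \<Rightarrow> real.
      0 \<le> \<epsilon> \<and> \<epsilon> \<le> 1 \<and>
      (\<forall>k\<le>n. \<omega> k \<in> Cset n k 0 0 \<and> \<omega> (n + k) \<in> Cset n n k k) \<longrightarrow>
      (let M = Max ((\<lambda>k. Ham n \<epsilon> h (\<omega> k)) ` {0..2*n}) in
        (even n \<longrightarrow> M = Ham n \<epsilon> h (\<omega> (n div 2)) \<and>
             Ham n \<epsilon> h (\<omega> (n div 2)) = real n - real n ^ 2 / 2 + h * real n) \<and>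
        (odd n \<and> h \<le> \<epsilon> \<longrightarrow> M = Ham n \<epsilon> h (\<omega> ((n + 1) div 2)) \<and>
             Ham n \<epsilon> h (\<omega> ((n + 1) div 2)) =
               real n - (real n ^ 2 + 1) / 2 + \<epsilon> + h * (real n - 1)) \<and>
        (odd n \<and> \<epsilon> < h \<longrightarrow> M = Ham n \<epsilon> h (\<omega> ((n - 1) div 2)) \<and>
             Ham n \<epsilon> h (\<omega> ((n - 1) div 2)) =
               real n - (real n ^ 2 + 1) / 2 - \<epsilon> + h * (real n + 1))))
  \<and>
   (\<forall>\<omega> :: nat \<Rightarrow> nat \<Rightarrow> real.
      0 < h \<and> h < - \<epsilon> \<and> - \<epsilon> \<le> 1 \<and>
      (\<forall>k\<le>n. \<omega> k \<in> Cset n (n - k) 0 0 \<and> \<omega> (n + k) \<in> Cset n 0 k 0) \<longrightarrow>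
      (let M = Max ((\<lambda>k. Ham n \<epsilon> h (\<omega> k)) ` {0..2*n}) in
        (even n \<and> h - \<epsilon> < 1 \<longrightarrow>
             M = Ham n \<epsilon> h (\<omega> (n div 2)) \<and>
             Ham n \<epsilon> h (\<omega> (n div 2)) = Ham n \<epsilon> h (\<omega> (n + n div 2)) \<and>
             Ham n \<epsilon> h (\<omega> (n + n div 2)) = real n - real n ^ 2 / 2 + h * real n) \<and>
        (even n \<and> 1 \<le> h - \<epsilon> \<and> h - \<epsilon> < 2 \<longrightarrow>
             M = Ham n \<epsilon> h (\<omega> ((n + 2) div 2)) \<and>
             Ham n \<epsilon> h (\<omega> ((n + 2) div 2)) = Ham n \<epsilon> h (\<omega> (n + (n - 2) div 2)) \<and>
             Ham n \<epsilon> h (\<omega> (n + (n - 2) div 2)) =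
               real n - real n ^ 2 / 2 - 2 * (\<epsilon> + 1) + h * (real n + 2)) \<and>
        (odd n \<longrightarrow>
             M = Ham n \<epsilon> h (\<omega> ((n + 1) div 2)) \<and>
             Ham n \<epsilon> h (\<omega> ((n + 1) div 2)) = Ham n \<epsilon> h (\<omega> (n + (n - 1) div 2)) \<and>
             Ham n \<epsilon> h (\<omega> (n + (n - 1) div 2)) =
               real n - (real n ^ 2 + 1) / 2 - \<epsilon> + h * (real n + 1))))
  \<and>
   (\<forall>\<omega> :: nat \<Rightarrow> nat \<Rightarrow> real.
      0 < - \<epsilon> \<and> - \<epsilon> < h \<and> h \<le> 1 \<and>
      (\<forall>k\<le>n. \<omega> k \<in> Cset n n k k) \<longrightarrow>
      (let M = Max ((\<lambda>k. Ham n \<epsilon> h (\<omega> k)) ` {0..n}) in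
        (even n \<longrightarrow> M = Ham n \<epsilon> h (\<omega> (n div 2)) \<and>
             Ham n \<epsilon> h (\<omega> (n div 2)) = real n - real n ^ 2 / 2 - h * real n) \<and>
        (odd n \<longrightarrow> M = Ham n \<epsilon> h (\<omega> ((n - 1) div 2)) \<and>
             Ham n \<epsilon> h (\<omega> ((n - 1) div 2)) =
               real n - (real n ^ 2 + 1) / 2 + \<epsilon> - h * (real n - 1))))"
  unfolding Let_def
  by (intro conjI allI impI; elim conjE)
    (use Max_Ham_path_a_by_parity[OF h0 h1] Max_Ham_path_b_by_parity[OF n2 h0 h1]
      Max_Ham_path_c_by_parity[OF h1] in auto)

end
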